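(* Let $\mu\in(0,1]$, let $X\subset\mathbb{R}^d$ be a complementary regular set with $\operatorname{reach}_\mu(X)>0$, and let $x\in\partial X$. Then $\Delta\big(\operatorname{Conv}(\operatorname{Nor}(\mathcal{C}X,x)\cap\mathbb{S}^{d-1})\big)\ge\mu$.
   Context: $d_A(y)=\inf_{a\in A}\|y-a\|$; $\mathcal{C}A:=\overline{\mathbb{R}^d\setminus A}$; $\partial A=\overline A\setminus\operatorname{int}A$; $\operatorname{Conv}$ is the convex hull; $\Delta(B)=\inf_{b\in B}\|b\|$. Clarke gradient $\partial\phi(y)$: convex hull of limits $\lim_i\nabla\phi(y_i)$, $y_i\to y$, $\phi$ differentiable at $y_i$. Reach of closed $A$: supremum of $t\ge0$ such that every $y$ with $d_A(y)<t$ has a unique nearest point in $A$. $\operatorname{reach}_\mu(A)=\sup\{s:\Delta(\partial d_A(y))\ge\mu\text{ for all }y\text{ with }0<d_A(y)\le s\}$. Complementary regular: compact $X$ with $\overline{\operatorname{int}X}=X$, $\operatorname{reach}_{\mu'}(X)>0$ for some $\mu'\in(0,1]$, $\operatorname{reach}(\mathcal{C}X)>0$. Tangent cone $\operatorname{Tan}(A,x)$: cone generated by limits $(x_n-x)/\|x_n-x\|$, $x_n\in A\setminus\{x\}$, $x_n\to x$. Polar cone $B^\circ=\{u:\langle u,b\rangle\le0\ \forall b\in B\}$. For a closed set $A$ of positive reach, $\operatorname{Nor}(A,x)=\operatorname{Tan}(A,x)^\circ$. *)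

theory Defs
  imports "HOL-Analysis.Analysis"
begin

definition dist_fun :: "'a::euclidean_space set \<Rightarrow> 'a \<Rightarrow> real" where
  "dist_fun A y = infdist y A"

definition compl_cl :: "'a::euclidean_space set \<Rightarrow> 'a set" where
  "compl_cl A = closure (UNIV - A)"

definition Delta :: "'a::euclidean_space set \<Rightarrow> real" where
  "Delta B = Inf (norm ` B)"

definition clarke_grad :: "('a::euclidean_space \<Rightarrow> real) \<Rightarrow> 'a \<Rightarrow> 'a set" where
  "clarke_grad \<phi> y = convex hull
     {l. \<exists>ys g. ys \<longlonglongrightarrow> y \<and>
                (\<forall>i. (\<phi> has_derivative (\<lambda>h. g i \<bullet> h)) (at (ys i))) \<and>
                g \<longlonglongrightarrow> l}"

text \<open>Reach of a set (may be infinite, hence extended real).\<close>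
definition reach :: "'a::euclidean_space set \<Rightarrow> ereal" where
  "reach A = Sup {ereal t | t. t \<ge> 0 \<and>
      (\<forall>y. dist_fun A y < t \<longrightarrow> (\<exists>!a. a \<in> A \<and> norm (y - a) = dist_fun A y))}"

definition reach_mu :: "real \<Rightarrow> 'a::euclidean_space set \<Rightarrow> ereal" where
  "reach_mu \<mu> A = Sup {ereal s | s. s \<ge> 0 \<and>
      (\<forall>y. 0 < dist_fun A y \<and> dist_fun A y \<le> s \<longrightarrow>
            Delta (clarke_grad (dist_fun A) y) \<ge> \<mu>)}"

definition complementary_regular :: "'a::euclidean_space set \<Rightarrow> bool" where
  "complementary_regular X \<longleftrightarrow>
     compact X \<and> closure (interior X) = X \<and>
     (\<exists>\<mu>'. 0 < \<mu>' \<and> \<mu>' \<le> 1 \<and> reach_mu \<mu>' X > 0) \<and>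
     reach (compl_cl X) > 0"

definition tan_cone :: "'a::euclidean_space set \<Rightarrow> 'a \<Rightarrow> 'a set" where
  "tan_cone A x =
     (let L = {u. \<exists>xs. (\<forall>n. xs n \<in> A - {x}) \<and> xs \<longlonglongrightarrow> x \<and>
                       (\<lambda>n. (1 / norm (xs n - x)) *\<^sub>R (xs n - x)) \<longlonglongrightarrow> u}
      in {0} \<union> {t *\<^sub>R u | t u. t \<ge> 0 \<and> u \<in> L})"

definition polar_cone :: "'a::euclidean_space set \<Rightarrow> 'a set" where
  "polar_cone B = {u. \<forall>b\<in>B. u \<bullet> b \<le> 0}"

definition nor_cone :: "'a::euclidean_space set \<Rightarrow> 'a \<Rightarrow> 'a set" where
  "nor_cone A x = polar_cone (tan_cone A x)"

end

theory Submission
  imports Defs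
begin

text \<open>Let \<open>v\<close> be the point of least norm in the convex hull of the unit normals of
  \<open>A = closure (- X)\<close> at \<open>x\<close>, so that \<open>norm v ^ 2 \<le> n \<bullet> v\<close> for every such normal \<open>n\<close>,
  and suppose \<open>norm v < \<mu>\<close>. As \<open>A\<close> has positive reach, the nearest-point directions of \<open>A\<close>
  near \<open>x\<close> are close to normals at \<open>x\<close>; hence a point \<open>y\<close> near \<open>x\<close> on the side of \<open>- v\<close> has
  distance to \<open>X\<close> at least about \<open>- v \<bullet> (y - x)\<close>. The bound on the Clarke gradient of the
  distance to \<open>X\<close> provides, at every point near \<open>x\<close>, an ascent direction of rate almost \<open>\<mu>\<close>,
  so a step of length \<open>t\<close> from \<open>y\<close> reaches a point \<open>z\<close> whose distance to \<open>X\<close> is larger by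
  almost \<open>\<mu> t\<close>. On the other hand every unit normal \<open>n\<close> is, uniformly, a Frechet normal of
  \<open>A\<close>, which bounds the distance from \<open>z\<close> to \<open>X\<close> by \<open>- n \<bullet> (z - x)\<close> up to \<open>O(\<epsilon> t)\<close>;
  averaging over the convex hull limits the rise to about \<open>norm v * t\<close>, a contradiction.\<close>

section \<open>Distance functions: differentiability and ascent\<close>

lemma has_derivative_squeeze:
  fixes f l u :: "'a::real_normed_vector \<Rightarrow> real"
  assumes "\<And>w. l w \<le> f w" "\<And>w. f w \<le> u w" "l y = f y" "u y = f y"
    and "(l has_derivative L) (at y)" "(u has_derivative L) (at y)"
  shows "(f has_derivative L) (at y)"
  unfolding has_derivative_at_alt
proof (intro conjI allI impI)
  show "bounded_linear L"
    using assms(5) by (rule has_derivative_bounded_linear)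
  fix e :: real assume "e > 0"
  then obtain d1 d2 where "d1 > 0" "d2 > 0"
    and d1: "\<And>w. norm (w - y) < d1 \<Longrightarrow> norm (l w - l y - L (w - y)) \<le> e * norm (w - y)"
    and d2: "\<And>w. norm (w - y) < d2 \<Longrightarrow> norm (u w - u y - L (w - y)) \<le> e * norm (w - y)"
    using assms(5,6) unfolding has_derivative_at_alt by blast
  show "\<exists>d>0. \<forall>w. norm (w - y) < d \<longrightarrow> norm (f w - f y - L (w - y)) \<le> e * norm (w - y)"
  proof (intro exI[of _ "min d1 d2"] conjI allI impI)
    show "min d1 d2 > 0"
      using \<open>d1 > 0\<close> \<open>d2 > 0\<close> by simp
    fix w assume "norm (w - y) < min d1 d2"
    then have "\<bar>l w - l y - L (w - y)\<bar> \<le> e * norm (w - y)" "\<bar>u w - u y - L (w - y)\<bar> \<le> e * norm (w - y)"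
      using d1 d2 by auto
    then show "norm (f w - f y - L (w - y)) \<le> e * norm (w - y)"
      using assms(1,2)[of w] assms(3,4) by (simp add: abs_le_iff)
  qed
qed

lemma power2_norm_add_scaleR:
  fixes v h :: "'a::real_inner"
  assumes "norm h = 1"
  shows "(norm (v + s *\<^sub>R h))\<^sup>2 = (norm v)\<^sup>2 + 2 * s * (h \<bullet> v) + s\<^sup>2"
proof -
  have "(norm (v + s *\<^sub>R h))\<^sup>2 = v \<bullet> v + 2 * s * (h \<bullet> v) + s\<^sup>2 * (h \<bullet> h)"
    by (simp only: dot_square_norm[symmetric])
      (simp add: inner_add_left inner_add_right inner_commute power2_eq_square algebra_simps)
  then show ?thesis
    using assms by (simp add: dot_square_norm)
qed

lemma has_derivative_norm_diff:
  fixes p y :: "'a::real_inner"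
  assumes "y \<noteq> p"
  shows "((\<lambda>w. norm (w - p)) has_derivative (\<lambda>h. sgn (y - p) \<bullet> h)) (at y)"
  using has_derivative_compose[OF has_derivative_diff[OF has_derivative_ident has_derivative_const]
      has_derivative_norm[of "y - p"]] assms
  by (simp add: o_def inner_commute)

text \<open>Between a nearest point \<open>p\<close> and \<open>z\<close>, the distance function is squeezed between
  \<open>infdist z S - norm (w - z)\<close> and \<open>norm (w - p)\<close>, which touch it there.\<close>
lemma infdist_has_derivative_on_segment:
  fixes S :: "'a::euclidean_space set"
  assumes "p \<in> S" "norm (z - p) = infdist z S" "0 < infdist z S" "0 < \<theta>" "\<theta> < 1"
  shows "((\<lambda>w. infdist w S) has_derivative (\<lambda>h. sgn (z - p) \<bullet> h)) (at (p + \<theta> *\<^sub>R (z - p)))"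
proof -
  define D where "D = infdist z S"
  define y where "y = p + \<theta> *\<^sub>R (z - p)"
  have upper: "infdist w S \<le> norm (w - p)" for w
    using infdist_le[OF assms(1)] by (simp add: dist_norm)
  have lower: "D - norm (w - z) \<le> infdist w S" for w
    using infdist_triangle[of z S w] by (simp add: D_def dist_norm norm_minus_commute)
  have yp: "y - p = \<theta> *\<^sub>R (z - p)" and yz: "y - z = - ((1 - \<theta>) *\<^sub>R (z - p))"
    by (simp_all add: y_def algebra_simps)
  have nyp: "norm (y - p) = \<theta> * D" and nyz: "norm (y - z) = (1 - \<theta>) * D"
    using assms(2,4,5) by (simp_all add: yp yz D_def)
  have "y \<noteq> p" "y \<noteq> z"
    using nyp nyz assms(3-5) by (auto simp: D_def)
  moreover have "sgn (y - p) = sgn (z - p)" "sgn (y - z) = - sgn (z - p)"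
    using assms(4,5) by (simp_all add: yp yz sgn_scaleR sgn_minus)
  ultimately have du: "((\<lambda>w. norm (w - p)) has_derivative (\<lambda>h. sgn (z - p) \<bullet> h)) (at y)"
    and dl: "((\<lambda>w. D - norm (w - z)) has_derivative (\<lambda>h. sgn (z - p) \<bullet> h)) (at y)"
    using has_derivative_norm_diff[of y p]
      has_derivative_diff[OF has_derivative_const has_derivative_norm_diff[of y z], of D]
    by simp_all
  have "D - norm (y - z) = infdist y S" "norm (y - p) = infdist y S"
    using upper[of y] lower[of y] nyp nyz by (simp_all add: algebra_simps)
  from has_derivative_squeeze[OF lower upper this dl du] show ?thesis
    by (simp add: y_def)
qed

lemma near_nearest_points_inherit:
  fixes S :: "'a::euclidean_space set" and g :: "'a \<Rightarrow> real"
  assumes "closed S" "continuous_on S g"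
    and "\<And>p. p \<in> S \<Longrightarrow> norm (z - p) = infdist z S \<Longrightarrow> c < g p"
  obtains \<eta> where "0 < \<eta>" "\<And>q. q \<in> S \<Longrightarrow> norm (z - q) < infdist z S + \<eta> \<Longrightarrow> c < g q"
proof -
  define K where "K = {q \<in> S. g q \<le> c} \<inter> cball z (infdist z S + 1)"
  have "compact K"
    unfolding K_def using assms(1,2)
    by (intro closed_Int_compact continuous_on_closed_Collect_le continuous_intros) auto
  show ?thesis
  proof (cases "K = {}")
    case True
    then show ?thesis
      by (intro that[of 1]) (auto simp: K_def dist_norm not_le)
  next
    case False
    have "continuous_on K (\<lambda>q. norm (z - q))"
      by (intro continuous_intros)
    then obtain q0 where q0: "q0 \<in> K" and min: "\<And>q. q \<in> K \<Longrightarrow> norm (z - q0) \<le> norm (z - q)"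
      using continuous_attains_inf[OF \<open>compact K\<close> False] by blast
    have "infdist z S \<le> norm (z - q0)"
      using q0 infdist_le[of q0 S z] by (simp add: K_def dist_norm)
    moreover have "norm (z - q0) \<noteq> infdist z S"
      using q0 assms(3)[of q0] by (auto simp: K_def)
    ultimately have "0 < min 1 (norm (z - q0) - infdist z S)"
      by simp
    moreover have "c < g q"
      if "q \<in> S" "norm (z - q) < infdist z S + min 1 (norm (z - q0) - infdist z S)" for q
    proof (rule ccontr)
      assume "\<not> c < g q"
      then have "q \<in> K"
        using that by (simp add: K_def dist_norm norm_minus_commute)
      then show False
        using min[of q] that(2) by simp
    qed
    ultimately show ?thesis
      by (rule that)
  qed
qed

lemma add_mult_le_of_power2_le:
  fixes D \<sigma> \<beta> \<epsilon> d :: real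
  assumes "0 < \<sigma>" "0 \<le> d" "\<sigma> * (\<beta> - \<epsilon>)\<^sup>2 \<le> D * \<epsilon>"
    and "D\<^sup>2 + 2 * \<sigma> * (D * (\<beta> - \<epsilon> / 2)) \<le> d\<^sup>2"
  shows "D + \<sigma> * (\<beta> - \<epsilon>) \<le> d"
proof -
  have "(D + \<sigma> * (\<beta> - \<epsilon>))\<^sup>2 = D\<^sup>2 + 2 * \<sigma> * (D * (\<beta> - \<epsilon>)) + \<sigma> * (\<sigma> * (\<beta> - \<epsilon>)\<^sup>2)"
    by (simp add: power2_eq_square algebra_simps)
  also have "\<dots> \<le> D\<^sup>2 + 2 * \<sigma> * (D * (\<beta> - \<epsilon>)) + \<sigma> * (D * \<epsilon>)"
    using assms(1,3) by simp
  also have "\<dots> \<le> d\<^sup>2"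
    using assms(4) by (simp add: algebra_simps)
  finally show ?thesis
    using assms(2) by (metis abs_le_square_iff abs_of_nonneg abs_ge_self order_trans)
qed

lemma power2_norm_shift_lower:
  fixes z q h :: "'a::real_inner"
  assumes "norm h = 1" "D \<le> norm (z - q)" "0 \<le> D" "0 \<le> \<sigma>" "c \<le> h \<bullet> (z - q)"
  shows "D\<^sup>2 + 2 * \<sigma> * c \<le> (norm (z + \<sigma> *\<^sub>R h - q))\<^sup>2"
proof -
  have "D\<^sup>2 \<le> (norm (z - q))\<^sup>2"
    using assms(2,3) by (simp add: power_mono)
  moreover have "2 * \<sigma> * c \<le> 2 * \<sigma> * (h \<bullet> (z - q))"
    using assms(4,5) by (simp add: mult_left_mono)
  moreover have "(norm (z + \<sigma> *\<^sub>R h - q))\<^sup>2 = (norm (z - q))\<^sup>2 + 2 * \<sigma> * (h \<bullet> (z - q)) + \<sigma>\<^sup>2"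
    using power2_norm_add_scaleR[OF assms(1), of "z - q" \<sigma>] by (simp add: algebra_simps)
  ultimately show ?thesis
    using zero_le_power2[of \<sigma>] by linarith
qed

text \<open>The nearest points of \<open>z + \<sigma> h\<close> are near-nearest points of \<open>z\<close>, so by
  \<open>near_nearest_points_inherit\<close> they still satisfy the angle condition up to \<open>\<epsilon> / 2\<close>.\<close>
lemma infdist_ascent:
  fixes S :: "'a::euclidean_space set"
  assumes "closed S" "S \<noteq> {}" "0 < infdist z S" "norm h = 1" "0 < \<epsilon>"
    and "\<And>p. p \<in> S \<Longrightarrow> norm (z - p) = infdist z S \<Longrightarrow> \<beta> * infdist z S \<le> h \<bullet> (z - p)"
  shows "\<forall>\<^sub>F \<sigma> in at_right 0. infdist z S + \<sigma> * (\<beta> - \<epsilon>) \<le> infdist (z + \<sigma> *\<^sub>R h) S"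
proof -
  have near: "infdist z S * (\<beta> - \<epsilon> / 2) < h \<bullet> (z - p)"
    if "p \<in> S" "norm (z - p) = infdist z S" for p
  proof -
    have "infdist z S * (\<beta> - \<epsilon> / 2) < \<beta> * infdist z S"
      using assms(3,5) by (simp add: algebra_simps)
    also have "\<dots> \<le> h \<bullet> (z - p)"
      using assms(6)[OF that] .
    finally show ?thesis .
  qed
  have "continuous_on S (\<lambda>q. h \<bullet> (z - q))"
    by (intro continuous_intros)
  then obtain \<eta> where "0 < \<eta>" and far: "\<And>q. q \<in> S \<Longrightarrow> norm (z - q) < infdist z S + \<eta> \<Longrightarrow>
      infdist z S * (\<beta> - \<epsilon> / 2) < h \<bullet> (z - q)"
    using near_nearest_points_inherit[of S "\<lambda>q. h \<bullet> (z - q)" z, OF assms(1) _ near] by blast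
  define D where "D = infdist z S"
  have "D > 0"
    using assms(3) by (simp add: D_def)
  define \<delta> where "\<delta> = min (\<eta> / 2) (D * \<epsilon> / ((\<beta> - \<epsilon>)\<^sup>2 + 1))"
  have "\<delta> > 0"
    using \<open>0 < \<eta>\<close> \<open>D > 0\<close> assms(5) by (simp add: \<delta>_def add_nonneg_pos)
  have "D + \<sigma> * (\<beta> - \<epsilon>) \<le> infdist (z + \<sigma> *\<^sub>R h) S" if "0 < \<sigma>" "\<sigma> < \<delta>" for \<sigma>
  proof -
    define w where "w = z + \<sigma> *\<^sub>R h"
    obtain q where "q \<in> S" and q: "infdist w S = norm (w - q)"
      using infdist_attains_inf[OF assms(1,2)] by (auto simp: dist_norm)
    have "infdist w S \<le> D + \<sigma>"
      using infdist_triangle[of w S z] assms(4) that(1) by (simp add: D_def w_def dist_norm)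
    then have "norm (z - q) \<le> D + 2 * \<sigma>"
      using q norm_triangle_ineq4[of "w - q" "w - z"] assms(4) that(1) by (simp add: w_def)
    then have hq: "D * (\<beta> - \<epsilon> / 2) < h \<bullet> (z - q)"
      using far[OF \<open>q \<in> S\<close>] that by (simp add: \<delta>_def D_def)
    have "D \<le> norm (z - q)"
      using infdist_le[OF \<open>q \<in> S\<close>, of z] by (simp add: D_def dist_norm)
    then have "D\<^sup>2 + 2 * \<sigma> * (D * (\<beta> - \<epsilon> / 2)) \<le> (infdist w S)\<^sup>2"
      using power2_norm_shift_lower[OF assms(4) _ _ _ less_imp_le[OF hq]] \<open>D > 0\<close> that(1) q
      by (simp add: w_def)
    moreover have "\<sigma> * (\<beta> - \<epsilon>)\<^sup>2 \<le> D * \<epsilon>"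
      using that \<open>D > 0\<close> assms(5) by (simp add: \<delta>_def field_simps add_pos_nonneg)
    ultimately show ?thesis
      using add_mult_le_of_power2_le[OF that(1) infdist_nonneg] by (simp add: w_def)
  qed
  then show ?thesis
    unfolding eventually_at_right_field D_def using \<open>\<delta> > 0\<close> by blast
qed

text \<open>Maximize \<open>f z - \<gamma> * norm (z - y)\<close> over the closed ball: at an interior maximizer an
  ascent direction of rate \<open>\<beta> > \<gamma>\<close> would increase it.\<close>
lemma ascent_reaches_sphere:
  fixes f :: "'a::euclidean_space \<Rightarrow> real"
  assumes "continuous_on (cball y l) f" "0 < l" "0 \<le> \<gamma>" "\<gamma> < \<beta>"
    and ascent: "\<And>z. z \<in> ball y l \<Longrightarrow> f y \<le> f z \<Longrightarrow>
        \<exists>h. norm h = 1 \<and> (\<forall>\<^sub>F \<sigma> in at_right 0. f z + \<sigma> * \<beta> \<le> f (z + \<sigma> *\<^sub>R h))"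
  shows "\<exists>z. norm (z - y) = l \<and> f y + \<gamma> * l \<le> f z"
proof -
  define \<phi> where "\<phi> z = f z - \<gamma> * norm (z - y)" for z
  have "continuous_on (cball y l) \<phi>"
    unfolding \<phi>_def by (intro continuous_intros assms(1))
  moreover have "cball y l \<noteq> {}"
    using assms(2) by simp
  ultimately obtain z0 where z0: "z0 \<in> cball y l" and max: "\<And>z. z \<in> cball y l \<Longrightarrow> \<phi> z \<le> \<phi> z0"
    using continuous_attains_sup[OF compact_cball] by blast
  have fz0: "f y + \<gamma> * norm (z0 - y) \<le> f z0"
    using max[of y] assms(2) by (simp add: \<phi>_def)
  have "norm (z0 - y) = l"
  proof (rule ccontr)
    assume "norm (z0 - y) \<noteq> l"
    then have "norm (z0 - y) < l"
      using z0 by (simp add: dist_norm norm_minus_commute)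
    moreover have "f y \<le> f z0"
      using fz0 assms(3) by (smt (verit) mult_nonneg_nonneg norm_ge_zero)
    ultimately obtain h where "norm h = 1"
      and "\<forall>\<^sub>F \<sigma> in at_right 0. f z0 + \<sigma> * \<beta> \<le> f (z0 + \<sigma> *\<^sub>R h)"
      using ascent[of z0] by (auto simp: dist_norm norm_minus_commute)
    moreover have "\<forall>\<^sub>F \<sigma> in at_right 0. 0 < \<sigma> \<and> \<sigma> < l - norm (z0 - y)"
      using \<open>norm (z0 - y) < l\<close> unfolding eventually_at_right_field
      by (intro exI[of _ "l - norm (z0 - y)"]) auto
    ultimately obtain \<sigma> where \<sigma>: "0 < \<sigma>" "\<sigma> < l - norm (z0 - y)"
      and rise: "f z0 + \<sigma> * \<beta> \<le> f (z0 + \<sigma> *\<^sub>R h)"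
      using eventually_happens'[OF trivial_limit_at_right_real eventually_conj] by blast
    have "norm (z0 + \<sigma> *\<^sub>R h - y) \<le> norm (z0 - y) + \<sigma>"
      using norm_triangle_ineq[of "z0 - y" "\<sigma> *\<^sub>R h"] \<open>norm h = 1\<close> \<sigma>(1)
      by (simp add: algebra_simps)
    moreover from this have "\<phi> (z0 + \<sigma> *\<^sub>R h) \<le> \<phi> z0"
      using \<sigma> by (intro max) (simp add: dist_norm norm_minus_commute)
    ultimately have "f z0 + \<sigma> * \<beta> - \<gamma> * (norm (z0 - y) + \<sigma>) \<le> f z0 - \<gamma> * norm (z0 - y)"
      using rise assms(3) unfolding \<phi>_def by (smt (verit) mult_left_mono)
    then have "\<sigma> * \<beta> \<le> \<sigma> * \<gamma>"
      by (simp add: algebra_simps)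
    then show False
      using assms(4) \<sigma>(1) by simp
  qed
  then show ?thesis
    using fz0 by auto
qed

section \<open>Clarke gradient of the distance function\<close>

lemma compact_convex_min_norm_point:
  fixes C :: "'a::euclidean_space set"
  assumes "compact C" "convex C" "C \<noteq> {}"
  obtains v where "v \<in> C" "\<And>c. c \<in> C \<Longrightarrow> (norm v)\<^sup>2 \<le> c \<bullet> v" "\<And>c. c \<in> C \<Longrightarrow> norm v \<le> norm c"
proof -
  obtain v where "v \<in> C" and min: "\<And>c. c \<in> C \<Longrightarrow> dist 0 v \<le> dist 0 c"
    using distance_attains_inf[OF compact_imp_closed[OF assms(1)] assms(3), of 0] by blast
  moreover have "(norm v)\<^sup>2 \<le> c \<bullet> v" if "c \<in> C" for c
  proof -
    have "(0 - v) \<bullet> (c - v) \<le> 0"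
      using any_closest_point_dot[OF assms(2) compact_imp_closed[OF assms(1)] \<open>v \<in> C\<close> that] min
      by blast
    then show ?thesis
      by (simp add: inner_diff_right inner_commute dot_square_norm)
  qed
  moreover have "norm v \<le> norm c" if "c \<in> C" for c
    using min[OF that] by simp
  ultimately show ?thesis
    using that by blast
qed

lemma inner_sgn_lower_bound:
  fixes v w :: "'a::real_inner"
  assumes "0 < \<mu>" "\<mu> \<le> norm v" "(norm v)\<^sup>2 \<le> sgn w \<bullet> v"
  shows "\<mu> * norm w \<le> sgn v \<bullet> w"
proof (cases "w = 0")
  case True
  then show ?thesis
    by simp
next
  case False
  have "v \<noteq> 0"
    using assms(1,2) by auto
  have "sgn w \<bullet> v = (v \<bullet> w) / norm w"
    by (simp add: sgn_div_norm inner_commute divide_inverse_commute)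
  with assms(3) False have "norm w * (norm v * norm v) \<le> v \<bullet> w"
    by (simp add: pos_le_divide_eq power2_eq_square mult.commute)
  moreover have "sgn v \<bullet> w = (v \<bullet> w) / norm v"
    by (simp add: sgn_div_norm divide_inverse_commute)
  ultimately have "norm w * norm v \<le> sgn v \<bullet> w"
    using \<open>v \<noteq> 0\<close> by (simp add: pos_le_divide_eq mult.assoc)
  moreover have "\<mu> * norm w \<le> norm w * norm v"
    using assms(2) by (simp add: mult.commute mult_right_mono)
  ultimately show ?thesis
    by linarith
qed

lemma Delta_le_norm:
  fixes B :: "'a::euclidean_space set"
  shows "b \<in> B \<Longrightarrow> Delta B \<le> norm b"
  unfolding Delta_def by (rule cInf_lower) (auto intro: bdd_belowI[of _ 0])

lemma Delta_geI:
  fixes B :: "'a::euclidean_space set"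
  shows "B \<noteq> {} \<Longrightarrow> (\<And>b. b \<in> B \<Longrightarrow> \<mu> \<le> norm b) \<Longrightarrow> \<mu> \<le> Delta B"
  unfolding Delta_def by (rule cInf_greatest) auto

lemma sgn_nearest_in_clarke_grad:
  fixes X :: "'a::euclidean_space set"
  assumes "p \<in> X" "norm (z - p) = infdist z X" "0 < infdist z X"
  shows "sgn (z - p) \<in> clarke_grad (dist_fun X) z"
proof -
  define \<theta> where "\<theta> i = 1 - 1 / (real i + 2)" for i :: nat
  have \<theta>: "0 < \<theta> i" "\<theta> i < 1" for i
    by (auto simp: \<theta>_def field_simps)
  have "(\<lambda>i. 1 / (real i + 2)) \<longlonglongrightarrow> 0"
    by (rule LIMSEQ_norm_0) (simp add: field_simps)
  then have "\<theta> \<longlonglongrightarrow> 1"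
    unfolding \<theta>_def by (auto intro: tendsto_eq_intros)
  then have "(\<lambda>i. p + \<theta> i *\<^sub>R (z - p)) \<longlonglongrightarrow> p + 1 *\<^sub>R (z - p)"
    by (intro tendsto_intros)
  then have "(\<lambda>i. p + \<theta> i *\<^sub>R (z - p)) \<longlonglongrightarrow> z"
    by simp
  moreover have "(dist_fun X has_derivative (\<lambda>h. sgn (z - p) \<bullet> h)) (at (p + \<theta> i *\<^sub>R (z - p)))" for i
    unfolding dist_fun_def[abs_def]
    using infdist_has_derivative_on_segment[OF assms \<theta>(1,2)[of i]] by simp
  ultimately show ?thesis
    unfolding clarke_grad_def by (intro hull_inc CollectI exI conjI allI tendsto_const) auto
qed

lemma clarke_grad_ascent_direction:
  fixes X :: "'a::euclidean_space set"
  assumes "closed X" "0 < infdist z X" "0 < \<mu>" "\<mu> \<le> Delta (clarke_grad (dist_fun X) z)"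
  obtains h where "norm h = 1"
    "\<And>p. p \<in> X \<Longrightarrow> norm (z - p) = infdist z X \<Longrightarrow> \<mu> * infdist z X \<le> h \<bullet> (z - p)"
proof -
  define P where "P = X \<inter> sphere z (infdist z X)"
  define C where "C = convex hull ((\<lambda>p. sgn (z - p)) ` P)"
  have P_iff: "p \<in> P \<longleftrightarrow> p \<in> X \<and> norm (z - p) = infdist z X" for p
    by (simp add: P_def dist_norm)
  have "X \<noteq> {}"
    using assms(2) by (metis infdist_def order_less_irrefl)
  then obtain p0 where "p0 \<in> X" "infdist z X = dist z p0"
    using infdist_attains_inf[OF assms(1)] by blast
  then have "p0 \<in> P"
    by (simp add: P_iff dist_norm)
  have cC: "compact C"
    unfolding C_def P_def
    by (intro compact_convex_hull compact_continuous_image continuous_intros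
        closed_Int_compact assms(1) compact_sphere) (use assms(2) in auto)
  have neC: "C \<noteq> {}"
    using \<open>p0 \<in> P\<close> by (auto simp: C_def)
  have vC: "convex C"
    by (simp add: C_def)
  obtain v where "v \<in> C" and v: "\<And>c. c \<in> C \<Longrightarrow> (norm v)\<^sup>2 \<le> c \<bullet> v"
    using compact_convex_min_norm_point[OF cC vC neC] by metis
  have "C \<subseteq> clarke_grad (dist_fun X) z"
    unfolding C_def using assms(2) sgn_nearest_in_clarke_grad
    by (intro hull_minimal) (auto simp: P_iff clarke_grad_def)
  then have "\<mu> \<le> norm v"
    using Delta_le_norm \<open>v \<in> C\<close> assms(4) by (meson order_trans subsetD)
  then have "v \<noteq> 0"
    using assms(3) by auto
  show ?thesis
  proof (rule that[of "sgn v"])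
    show "norm (sgn v) = 1"
      using \<open>v \<noteq> 0\<close> by (simp add: norm_sgn)
    fix p assume "p \<in> X" "norm (z - p) = infdist z X"
    then have "(norm v)\<^sup>2 \<le> sgn (z - p) \<bullet> v"
      by (intro v) (auto simp: C_def P_iff intro: hull_inc)
    from inner_sgn_lower_bound[OF assms(3) \<open>\<mu> \<le> norm v\<close> this]
    show "\<mu> * infdist z X \<le> sgn v \<bullet> (z - p)"
      using \<open>norm (z - p) = infdist z X\<close> by simp
  qed
qed

section \<open>Tangent and normal cones\<close>

lemma closed_polar_cone: "closed (polar_cone B)"
proof -
  have "polar_cone B = (\<Inter>b\<in>B. {u. b \<bullet> u \<le> 0})"
    by (auto simp: polar_cone_def inner_commute)
  then show ?thesis
    by (simp add: closed_INT closed_halfspace_le)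
qed

lemma compact_nor_cone_sphere: "compact (nor_cone A x \<inter> sphere 0 1)"
  unfolding nor_cone_def by (rule closed_Int_compact[OF closed_polar_cone compact_sphere])

lemma tan_cone_eq_limit_directions:
  "tan_cone A x = {0} \<union> {t *\<^sub>R l | t l. 0 \<le> t \<and>
     (\<exists>xs. (\<forall>n. xs n \<in> A - {x}) \<and> xs \<longlonglongrightarrow> x \<and> (\<lambda>n. sgn (xs n - x)) \<longlonglongrightarrow> l)}"
  by (simp add: tan_cone_def Let_def sgn_div_norm divide_inverse)

lemma nor_cone_limit_direction:
  assumes "u \<in> nor_cone A x" "\<And>n. xs n \<in> A - {x}" "xs \<longlonglongrightarrow> x" "(\<lambda>n. sgn (xs n - x)) \<longlonglongrightarrow> l"
  shows "u \<bullet> l \<le> 0"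
proof -
  have "1 *\<^sub>R l \<in> tan_cone A x"
    unfolding tan_cone_eq_limit_directions using assms(2-4)
    by (intro UnI2 CollectI exI[of _ 1] exI[of _ l]) auto
  with assms(1) show ?thesis
    by (simp add: nor_cone_def polar_cone_def)
qed

lemma nor_cone_memI:
  assumes "\<And>xs l. \<forall>n. xs n \<in> A - {x} \<Longrightarrow> xs \<longlonglongrightarrow> x \<Longrightarrow> (\<lambda>n. sgn (xs n - x)) \<longlonglongrightarrow> l \<Longrightarrow> u \<bullet> l \<le> 0"
  shows "u \<in> nor_cone A x"
proof -
  have "u \<bullet> b \<le> 0" if "b \<in> tan_cone A x" for b
    using that assms unfolding tan_cone_eq_limit_directions by (force intro: mult_nonneg_nonpos)
  then show ?thesis
    by (simp add: nor_cone_def polar_cone_def)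
qed

text \<open>For a unit vector \<open>u\<close> the hypothesis says that the open ball of radius \<open>\<rho>\<close> about
  \<open>x + \<rho> u\<close> misses \<open>A\<close>.\<close>
lemma proximal_normal_in_nor_cone:
  assumes "0 < \<rho>" and ball: "\<And>b. b \<in> A \<Longrightarrow> 2 * \<rho> * (u \<bullet> (b - x)) \<le> (norm (b - x))\<^sup>2"
  shows "u \<in> nor_cone A x"
proof (rule nor_cone_memI)
  fix xs l assume xs: "\<forall>n. xs n \<in> A - {x}" "xs \<longlonglongrightarrow> x" and l: "(\<lambda>n. sgn (xs n - x)) \<longlonglongrightarrow> l"
  have "u \<bullet> sgn (xs n - x) \<le> norm (xs n - x) / (2 * \<rho>)" for n
  proof -
    have "xs n \<in> A" and pos: "0 < norm (xs n - x)"
      using xs(1) by auto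
    have "u \<bullet> sgn (xs n - x) = (u \<bullet> (xs n - x)) / norm (xs n - x)"
      by (simp add: sgn_div_norm divide_inverse_commute)
    also have "\<dots> \<le> (norm (xs n - x))\<^sup>2 / (2 * \<rho>) / norm (xs n - x)"
      using ball[OF \<open>xs n \<in> A\<close>] pos assms(1)
      by (intro divide_right_mono) (simp_all add: pos_le_divide_eq mult.commute)
    also have "\<dots> = norm (xs n - x) / (2 * \<rho>)"
      using pos by (simp add: power2_eq_square)
    finally show ?thesis .
  qed
  moreover have "(\<lambda>n. norm (xs n - x) / (2 * \<rho>)) \<longlonglongrightarrow> 0"
    using xs(2) assms(1) by (auto intro!: tendsto_eq_intros simp: LIM_zero_iff tendsto_norm_zero_iff)
  ultimately show "u \<bullet> l \<le> 0"
    by (intro LIMSEQ_le[OF tendsto_inner[OF tendsto_const l]]) auto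
qed

lemma nor_cone_uniform_frechet:
  assumes "0 < \<epsilon>"
  shows "\<exists>\<delta>>0. \<forall>n\<in>nor_cone A x \<inter> sphere 0 1. \<forall>a\<in>A. norm (a - x) < \<delta> \<longrightarrow> n \<bullet> (a - x) \<le> \<epsilon> * norm (a - x)"
proof (rule ccontr)
  define N where "N = nor_cone A x \<inter> sphere 0 1"
  assume "\<not> ?thesis"
  then have "\<forall>k. \<exists>n a. n \<in> N \<and> a \<in> A \<and> norm (a - x) < 1 / Suc k \<and> \<epsilon> * norm (a - x) < n \<bullet> (a - x)"
    unfolding N_def by (metis not_le of_nat_0_less_iff zero_less_Suc zero_less_divide_1_iff)
  then obtain nn aa where nn: "\<And>k. nn k \<in> N" and aa: "\<And>k. aa k \<in> A"
    and close: "\<And>k. norm (aa k - x) < 1 / Suc k" and large: "\<And>k. \<epsilon> * norm (aa k - x) < nn k \<bullet> (aa k - x)"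
    by metis
  have "aa k \<noteq> x" for k
    using large[of k] by auto
  have cpt: "compact (N \<times> sphere (0::'a) 1)"
    unfolding N_def by (intro compact_Times compact_nor_cone_sphere compact_sphere)
  have inS: "\<forall>k. (nn k, sgn (aa k - x)) \<in> N \<times> sphere 0 1"
    using nn \<open>\<And>k. aa k \<noteq> x\<close> by (simp add: norm_sgn)
  obtain nl \<sigma> where "nl \<in> N \<times> sphere 0 1" "strict_mono \<sigma>"
    and lim: "((\<lambda>k. (nn k, sgn (aa k - x))) \<circ> \<sigma>) \<longlonglongrightarrow> nl"
    by (rule seq_compactE[OF compact_imp_seq_compact[OF cpt] inS])
  define n l where "n = fst nl" and "l = snd nl"
  have "aa \<longlonglongrightarrow> x"
    using close by (intro LIMSEQ_norm_0[THEN LIM_zero_cancel]) auto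
  then have "(\<lambda>k. aa (\<sigma> k)) \<longlonglongrightarrow> x"
    using LIMSEQ_subseq_LIMSEQ[OF _ \<open>strict_mono \<sigma>\<close>] by (simp add: o_def)
  moreover have l: "(\<lambda>k. sgn (aa (\<sigma> k) - x)) \<longlonglongrightarrow> l" and n: "(\<lambda>k. nn (\<sigma> k)) \<longlonglongrightarrow> n"
    using tendsto_snd[OF lim] tendsto_fst[OF lim] by (simp_all add: o_def n_def l_def)
  moreover have "n \<in> nor_cone A x"
    using \<open>nl \<in> N \<times> sphere 0 1\<close> by (auto simp: N_def n_def)
  ultimately have "n \<bullet> l \<le> 0"
    using aa \<open>\<And>k. aa k \<noteq> x\<close> by (intro nor_cone_limit_direction) auto
  moreover have "\<epsilon> < nn k \<bullet> sgn (aa k - x)" for k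
  proof -
    have "nn k \<bullet> sgn (aa k - x) = (nn k \<bullet> (aa k - x)) / norm (aa k - x)"
      by (simp add: sgn_div_norm divide_inverse_commute)
    then show ?thesis
      using large[of k] \<open>aa k \<noteq> x\<close> by (simp add: pos_less_divide_eq)
  qed
  then have "\<epsilon> \<le> n \<bullet> l"
    by (intro LIMSEQ_le_const[OF tendsto_inner[OF n l]]) (auto intro: less_imp_le)
  ultimately show False
    using assms by simp
qed

lemma proximal_inequality_limit:
  fixes aa uu :: "nat \<Rightarrow> 'a::real_inner"
  assumes "aa \<longlonglongrightarrow> x" "uu \<longlonglongrightarrow> u"
    and "\<forall>\<^sub>F k in sequentially. c * (uu k \<bullet> (b - aa k)) \<le> (norm (b - aa k))\<^sup>2"
  shows "c * (u \<bullet> (b - x)) \<le> (norm (b - x))\<^sup>2"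
  using assms by (intro tendsto_le[OF trivial_limit_sequentially _ _ assms(3)] tendsto_intros)

section \<open>Nearest points and proximal normals\<close>

lemma infdist_on_nearest_segment:
  fixes A :: "'a::euclidean_space set"
  assumes "a \<in> A" "norm (z - a) = infdist z A" "0 \<le> s" "s \<le> norm (z - a)"
  shows "infdist (a + s *\<^sub>R sgn (z - a)) A = s"
proof (cases "z = a")
  case True
  then show ?thesis
    using assms by simp
next
  case False
  define u where "u = sgn (z - a)"
  have "norm u = 1"
    using False by (simp add: u_def norm_sgn)
  have "infdist (a + s *\<^sub>R u) A \<le> s"
    using infdist_le[OF assms(1), of "a + s *\<^sub>R u"] \<open>norm u = 1\<close> assms(3) by (simp add: dist_norm)
  moreover have "z - (a + s *\<^sub>R u) = (norm (z - a) - s) *\<^sub>R u"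
    using False by (simp add: u_def sgn_div_norm algebra_simps)
  then have "infdist z A \<le> infdist (a + s *\<^sub>R u) A + (norm (z - a) - s)"
    using infdist_triangle[of z A "a + s *\<^sub>R u"] \<open>norm u = 1\<close> assms(4) by (simp add: dist_norm)
  ultimately show ?thesis
    using assms(2) by (simp add: u_def)
qed

lemma infdist_beyond_nearest:
  fixes A :: "'a::euclidean_space set"
  assumes "a \<in> A" "norm (z - a) = infdist z A" "z \<noteq> a"
    and "norm (w - z) = \<tau>" "infdist z A + \<tau> \<le> infdist w A"
  shows "w = a + (infdist z A + \<tau>) *\<^sub>R sgn (z - a)" "infdist w A = infdist z A + \<tau>"
proof -
  have le: "infdist w A \<le> norm ((w - z) + (z - a))"
    using infdist_le[OF assms(1), of w] by (simp add: dist_norm)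
  have tri: "norm ((w - z) + (z - a)) \<le> norm (w - z) + norm (z - a)"
    by (rule norm_triangle_ineq)
  show "infdist w A = infdist z A + \<tau>"
    using le tri assms(2,4,5) by linarith
  have eq: "norm ((w - z) + (z - a)) = norm (w - z) + norm (z - a)"
    using le tri assms(2,4,5) by linarith
  from eq have scaled: "norm (z - a) *\<^sub>R (w - z) = \<tau> *\<^sub>R (z - a)"
    unfolding norm_triangle_eq using assms(4) by simp
  have "w - z = (1 / norm (z - a)) *\<^sub>R (norm (z - a) *\<^sub>R (w - z))"
    using assms(3) by simp
  also have "\<dots> = \<tau> *\<^sub>R sgn (z - a)"
    unfolding scaled by (simp add: sgn_div_norm divide_inverse mult.commute)
  finally have "w - z = \<tau> *\<^sub>R sgn (z - a)" .
  moreover have "z - a = norm (z - a) *\<^sub>R sgn (z - a)"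
    using assms(3) by (simp add: sgn_div_norm)
  ultimately have "w = a + (norm (z - a) + \<tau>) *\<^sub>R sgn (z - a)"
    by (metis add.commute diff_add_cancel scaleR_add_left add.assoc)
  then show "w = a + (infdist z A + \<tau>) *\<^sub>R sgn (z - a)"
    using assms(2) by simp
qed

lemma nearest_points_tendsto:
  fixes A :: "'a::euclidean_space set"
  assumes "x \<in> A" "zz \<longlonglongrightarrow> x" "\<And>k. norm (zz k - aa k) = infdist (zz k) A"
  shows "aa \<longlonglongrightarrow> x"
proof -
  have "norm (aa k - x) \<le> 2 * norm (zz k - x)" for k
  proof -
    have "norm ((zz k - x) - (zz k - aa k)) \<le> norm (zz k - x) + norm (zz k - aa k)"
      by (rule norm_triangle_ineq4)
    moreover have "infdist (zz k) A \<le> norm (zz k - x)"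
      using infdist_le[OF assms(1)] by (simp add: dist_norm)
    ultimately show ?thesis
      using assms(3)[of k] by simp
  qed
  then have "\<forall>\<^sub>F k in sequentially. norm (aa k - x) \<le> 2 * norm (zz k - x)"
    by (intro always_eventually allI)
  moreover have "(\<lambda>k. 2 * norm (zz k - x)) \<longlonglongrightarrow> 0"
    using tendsto_mult_right_zero[OF tendsto_norm_zero[OF LIM_zero[OF assms(2)]]] by simp
  ultimately have "(\<lambda>k. aa k - x) \<longlonglongrightarrow> 0"
    by (rule Lim_null_comparison)
  then show ?thesis
    by (simp add: LIM_zero_iff)
qed

lemma proximal_normal_inequality:
  fixes A :: "'a::euclidean_space set"
  assumes "infdist (a + \<rho> *\<^sub>R u) A = \<rho>" "norm u = 1" "b \<in> A"
  shows "2 * \<rho> * (u \<bullet> (b - a)) \<le> (norm (b - a))\<^sup>2"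
proof -
  have "\<rho> \<le> norm ((a - b) + \<rho> *\<^sub>R u)"
    using infdist_le[OF assms(3), of "a + \<rho> *\<^sub>R u"] assms(1) by (simp add: dist_norm algebra_simps)
  moreover have "0 \<le> \<rho>"
    using assms(1) infdist_nonneg by metis
  ultimately have "\<rho>\<^sup>2 \<le> (norm (a - b))\<^sup>2 + 2 * \<rho> * (u \<bullet> (a - b)) + \<rho>\<^sup>2"
    using power2_norm_add_scaleR[OF assms(2), of "a - b" \<rho>] by (metis power_mono)
  then show ?thesis
    by (simp add: norm_minus_commute inner_diff_right algebra_simps)
qed

locale unique_nearest_within =
  fixes A :: "'a::euclidean_space set" and r :: real
  assumes closed: "closed A" and nonempty: "A \<noteq> {}" and r_pos: "0 < r"
    and unique_nearest: "\<And>y. infdist y A < r \<Longrightarrow> \<exists>!a. a \<in> A \<and> norm (y - a) = infdist y A"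
begin

lemma infdist_unit_ascent:
  assumes "0 < infdist z A" "infdist z A < r" "0 < \<epsilon>"
  obtains h where "norm h = 1" "\<forall>\<^sub>F \<sigma> in at_right 0. infdist z A + \<sigma> * (1 - \<epsilon>) \<le> infdist (z + \<sigma> *\<^sub>R h) A"
proof -
  obtain p where "p \<in> A" and "infdist z A = dist z p"
    using infdist_attains_inf[OF closed nonempty] by blast
  then have p: "norm (z - p) = infdist z A"
    by (simp add: dist_norm)
  have "z \<noteq> p"
    using p assms(1) by auto
  have "1 * infdist z A \<le> sgn (z - p) \<bullet> (z - p')" if "p' \<in> A" "norm (z - p') = infdist z A" for p'
  proof -
    have "p' = p"
      using unique_nearest[OF assms(2)] that \<open>p \<in> A\<close> p by blast
    then show ?thesis
      using p assms(1) by (simp add: sgn_div_norm dot_square_norm power2_eq_square)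
  qed
  then have "\<forall>\<^sub>F \<sigma> in at_right 0. infdist z A + \<sigma> * (1 - \<epsilon>) \<le> infdist (z + \<sigma> *\<^sub>R sgn (z - p)) A"
    using infdist_ascent[OF closed nonempty assms(1) _ assms(3)] \<open>z \<noteq> p\<close> by (simp add: norm_sgn)
  then show ?thesis
    using that[of "sgn (z - p)"] \<open>z \<noteq> p\<close> by (simp add: norm_sgn)
qed

lemma infdist_sphere_ascent:
  assumes "0 < infdist z A" "0 < \<tau>" "infdist z A + \<tau> \<le> r"
  obtains w where "norm (w - z) = \<tau>" "infdist z A + \<tau> \<le> infdist w A"
proof -
  have rise: "\<exists>w. norm (w - z) = \<tau> \<and> infdist z A + \<gamma> * \<tau> \<le> infdist w A" if "0 < \<gamma>" "\<gamma> < 1" for \<gamma>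
  proof (rule ascent_reaches_sphere[where \<beta> = "(1 + \<gamma>) / 2"])
    show "continuous_on (cball z \<tau>) (\<lambda>w. infdist w A)"
      by (intro continuous_intros)
    show "0 < \<tau>" "0 \<le> \<gamma>" "\<gamma> < (1 + \<gamma>) / 2"
      using assms(2) that by auto
    fix z' assume "z' \<in> ball z \<tau>" "infdist z A \<le> infdist z' A"
    moreover have "infdist z' A \<le> infdist z A + dist z' z"
      by (rule infdist_triangle)
    ultimately have "0 < infdist z' A" "infdist z' A < r"
      using assms by (auto simp: dist_commute)
    moreover have "0 < (1 - \<gamma>) / 2"
      using that by simp
    ultimately obtain h where "norm h = 1"
      "\<forall>\<^sub>F \<sigma> in at_right 0. infdist z' A + \<sigma> * (1 - (1 - \<gamma>) / 2) \<le> infdist (z' + \<sigma> *\<^sub>R h) A"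
      by (rule infdist_unit_ascent)
    moreover have "1 - (1 - \<gamma>) / 2 = (1 + \<gamma>) / 2"
      by (simp add: field_simps)
    ultimately show "\<exists>h. norm h = 1 \<and>
        (\<forall>\<^sub>F \<sigma> in at_right 0. infdist z' A + \<sigma> * ((1 + \<gamma>) / 2) \<le> infdist (z' + \<sigma> *\<^sub>R h) A)"
      by auto
  qed
  have "sphere z \<tau> \<noteq> {}"
    using assms(2) by simp
  then obtain ws where ws: "ws \<in> sphere z \<tau>" and max: "\<And>w. w \<in> sphere z \<tau> \<Longrightarrow> infdist w A \<le> infdist ws A"
    using continuous_attains_sup[OF compact_sphere _ continuous_on_infdist[OF continuous_on_id]] by blast
  have "\<tau> \<le> infdist ws A - infdist z A"
  proof (rule field_le_mult_one_interval)
    fix \<gamma> :: real assume "0 < \<gamma>" "\<gamma> < 1"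
    then obtain w where "norm (w - z) = \<tau>" "infdist z A + \<gamma> * \<tau> \<le> infdist w A"
      using rise by blast
    then show "\<gamma> * \<tau> \<le> infdist ws A - infdist z A"
      using max[of w] by (simp add: dist_norm norm_minus_commute)
  qed
  then show ?thesis
    using that[of ws] ws by (simp add: dist_norm norm_minus_commute)
qed

lemma infdist_normal_ray:
  assumes "a \<in> A" "z \<notin> A" "norm (z - a) = infdist z A" "infdist z A < r" "0 \<le> \<rho>" "\<rho> < r"
  shows "infdist (a + \<rho> *\<^sub>R sgn (z - a)) A = \<rho>"
proof (cases "\<rho> \<le> infdist z A")
  case True
  then show ?thesis
    using infdist_on_nearest_segment[OF assms(1,3,5)] assms(3) by simp
next
  case False
  have "0 < infdist z A"
    using infdist_pos_not_in_closed[OF closed nonempty assms(2)] .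
  then obtain w where w: "norm (w - z) = \<rho> - infdist z A" "infdist z A + (\<rho> - infdist z A) \<le> infdist w A"
    using infdist_sphere_ascent[of z "\<rho> - infdist z A"] False assms(6) by auto
  moreover have "z \<noteq> a"
    using assms(1,2) by auto
  ultimately show ?thesis
    using infdist_beyond_nearest[OF assms(1,3) \<open>z \<noteq> a\<close> w] by simp
qed

lemma nearest_direction_proximal:
  assumes "q \<notin> A" "a \<in> A" "norm (q - a) = infdist q A" "infdist q A < r" "b \<in> A"
  shows "r * (sgn (q - a) \<bullet> (b - a)) \<le> (norm (b - a))\<^sup>2"
proof -
  have "infdist (a + (r / 2) *\<^sub>R sgn (q - a)) A = r / 2"
    using infdist_normal_ray[OF assms(2,1,3,4)] r_pos by simp
  moreover have "norm (sgn (q - a)) = 1"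
    using assms(1,2) by (auto simp: norm_sgn)
  ultimately have "2 * (r / 2) * (sgn (q - a) \<bullet> (b - a)) \<le> (norm (b - a))\<^sup>2"
    by (rule proximal_normal_inequality[OF _ _ assms(5)])
  then show ?thesis
    by simp
qed

lemma nearest_directions_limit:
  assumes "x \<in> A" "zz \<longlonglongrightarrow> x" "\<And>k. zz k \<notin> A"
    and "\<And>k. aa k \<in> A" "\<And>k. norm (zz k - aa k) = infdist (zz k) A"
  obtains \<sigma> u where "strict_mono \<sigma>" "(\<lambda>k. sgn (zz (\<sigma> k) - aa (\<sigma> k))) \<longlonglongrightarrow> u"
    "u \<in> nor_cone A x \<inter> sphere 0 1"
proof -
  have "\<forall>k. sgn (zz k - aa k) \<in> sphere 0 1"
    using assms(3,4) by (metis mem_sphere_0 norm_sgn right_minus_eq)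
  then obtain u \<sigma> where "u \<in> sphere 0 1" "strict_mono \<sigma>"
    and lim: "((\<lambda>k. sgn (zz k - aa k)) \<circ> \<sigma>) \<longlonglongrightarrow> u"
    by (rule seq_compactE[OF compact_imp_seq_compact[OF compact_sphere]])
  have near: "infdist (zz k) A \<le> norm (zz k - x)" for k
    using infdist_le[OF assms(1)] by (simp add: dist_norm)
  have "aa \<longlonglongrightarrow> x"
    using nearest_points_tendsto[OF assms(1,2,5)] .
  then have "(\<lambda>k. aa (\<sigma> k)) \<longlonglongrightarrow> x"
    using LIMSEQ_subseq_LIMSEQ[OF _ \<open>strict_mono \<sigma>\<close>, of aa] by (simp add: o_def)
  have "\<forall>\<^sub>F k in sequentially. infdist (zz k) A < r"
  proof -
    have "(\<lambda>k. norm (zz k - x)) \<longlonglongrightarrow> 0"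
      using assms(2) by (simp add: LIM_zero_iff tendsto_norm_zero_iff)
    then have "\<forall>\<^sub>F k in sequentially. norm (zz k - x) < r"
      using order_tendstoD(2)[OF _ r_pos] by blast
    then show ?thesis
      by (rule eventually_mono) (use near in \<open>rule le_less_trans\<close>)
  qed
  then have "\<forall>\<^sub>F k in sequentially. infdist (zz (\<sigma> k)) A < r"
    by (rule eventually_subseq[OF \<open>strict_mono \<sigma>\<close>])
  then have prox: "\<forall>\<^sub>F k in sequentially. \<forall>b\<in>A.
      r * (sgn (zz (\<sigma> k) - aa (\<sigma> k)) \<bullet> (b - aa (\<sigma> k))) \<le> (norm (b - aa (\<sigma> k)))\<^sup>2"
    by (rule eventually_mono) (use nearest_direction_proximal assms(3-5) in blast)
  have "2 * (r / 2) * (u \<bullet> (b - x)) \<le> (norm (b - x))\<^sup>2" if "b \<in> A" for b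
  proof -
    from prox have "\<forall>\<^sub>F k in sequentially. r * (sgn (zz (\<sigma> k) - aa (\<sigma> k)) \<bullet> (b - aa (\<sigma> k))) \<le> (norm (b - aa (\<sigma> k)))\<^sup>2"
      by (rule eventually_mono) (use that in blast)
    from proximal_inequality_limit[OF \<open>(\<lambda>k. aa (\<sigma> k)) \<longlonglongrightarrow> x\<close> lim[unfolded o_def] this]
    show ?thesis
      by simp
  qed
  then have "u \<in> nor_cone A x"
    using r_pos by (intro proximal_normal_in_nor_cone[of "r / 2"]) auto
  then show ?thesis
    using that \<open>strict_mono \<sigma>\<close> lim \<open>u \<in> sphere 0 1\<close> by (auto simp: o_def)
qed

text \<open>By the proximal inequality, \<open>A\<close> lies almost in the half-space
  \<open>sgn (q - a) \<bullet> (_ - a) \<le> 0\<close> near \<open>q\<close>.\<close>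
lemma nearest_direction_almost_tangent:
  assumes "x \<in> A" "q \<notin> A" "a \<in> A" "norm (q - a) = infdist q A"
    and "norm (q - x) < 2 * t" "0 < t" "2 * t < r" "32 * t \<le> \<epsilon> * r"
  shows "sgn (q - a) \<bullet> (x - a) \<le> t * \<epsilon> / 2"
proof -
  have iq: "infdist q A \<le> norm (q - x)"
    using infdist_le[OF assms(1), of q] by (simp add: dist_norm)
  have "r * (sgn (q - a) \<bullet> (x - a)) \<le> (norm (x - a))\<^sup>2"
    using nearest_direction_proximal[OF assms(2-4) _ assms(1)] iq assms(5,7) by simp
  also have "\<dots> \<le> (4 * t)\<^sup>2"
  proof -
    have "norm (x - a) \<le> norm (x - q) + norm (q - a)"
      using norm_triangle_ineq[of "x - q" "q - a"] by simp
    then have "norm (x - a) \<le> 4 * t"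
      using assms(4,5) iq by (simp add: norm_minus_commute)
    then show ?thesis
      by (intro power_mono) auto
  qed
  also have "\<dots> \<le> r * (t * \<epsilon> / 2)"
    using assms(6,8) by (simp add: power2_eq_square mult_left_mono algebra_simps)
  finally show ?thesis
    using r_pos by simp
qed

text \<open>Upper semicontinuity of the nearest-point directions at \<open>x\<close>.\<close>
lemma nearest_directions_near_nor_cone:
  assumes "x \<in> A" "\<And>n. n \<in> nor_cone A x \<inter> sphere 0 1 \<Longrightarrow> c \<le> n \<bullet> v" "0 < \<epsilon>"
  obtains \<delta> where "0 < \<delta>" "\<And>q a. q \<notin> A \<Longrightarrow> norm (q - x) < \<delta> \<Longrightarrow> a \<in> A \<Longrightarrow>
      norm (q - a) = infdist q A \<Longrightarrow> c - \<epsilon> \<le> sgn (q - a) \<bullet> v"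
proof -
  have "\<exists>\<delta>>0. \<forall>q a. q \<notin> A \<longrightarrow> norm (q - x) < \<delta> \<longrightarrow> a \<in> A \<longrightarrow>
      norm (q - a) = infdist q A \<longrightarrow> c - \<epsilon> \<le> sgn (q - a) \<bullet> v"
  proof (rule ccontr)
    assume "\<not> ?thesis"
    then have "\<forall>k. \<exists>q a. q \<notin> A \<and> norm (q - x) < 1 / Suc k \<and> a \<in> A \<and>
        norm (q - a) = infdist q A \<and> sgn (q - a) \<bullet> v < c - \<epsilon>"
      by (metis not_le of_nat_0_less_iff zero_less_Suc zero_less_divide_1_iff)
    then obtain zz aa where zz: "\<And>k. zz k \<notin> A" "\<And>k. norm (zz k - x) < 1 / Suc k"
      and aa: "\<And>k. aa k \<in> A" "\<And>k. norm (zz k - aa k) = infdist (zz k) A"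
      and bad: "\<And>k. sgn (zz k - aa k) \<bullet> v < c - \<epsilon>"
      by metis
    have "zz \<longlonglongrightarrow> x"
      using zz(2) by (intro LIMSEQ_norm_0[THEN LIM_zero_cancel]) auto
    then obtain \<sigma> u where "strict_mono \<sigma>" "(\<lambda>k. sgn (zz (\<sigma> k) - aa (\<sigma> k))) \<longlonglongrightarrow> u"
      and "u \<in> nor_cone A x \<inter> sphere 0 1"
      using nearest_directions_limit[of x zz aa, OF assms(1) _ zz(1) aa] by blast
    then have "u \<bullet> v \<le> c - \<epsilon>"
      using bad by (intro LIMSEQ_le_const2[OF tendsto_inner[OF _ tendsto_const]]) (auto intro: less_imp_le)
    then show False
      using assms(2)[OF \<open>u \<in> nor_cone A x \<inter> sphere 0 1\<close>] assms(3) by simp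
  qed
  then show ?thesis
    using that by blast
qed

end

section \<open>Normals at a boundary point of a complementary regular set\<close>

locale complementary_regular_point = unique_nearest_within A r
  for A :: "'a::euclidean_space set" and r :: real +
  fixes X :: "'a set" and x :: 'a and s \<mu> :: real
  assumes closed_X: "closed X" and regular_closed: "closure (interior X) = X"
    and A_eq: "A = - interior X" and x_frontier: "x \<in> frontier X"
    and s_pos: "0 < s"
    and clarke_bound: "\<And>y. 0 < infdist y X \<Longrightarrow> infdist y X \<le> s \<Longrightarrow> \<mu> \<le> Delta (clarke_grad (dist_fun X) y)"
    and mu_pos: "0 < \<mu>" and mu_le_1: "\<mu> \<le> 1"
begin

lemma x_in_X: "x \<in> X"
  using x_frontier closed_X by (simp add: frontier_def)

lemma x_in_A: "x \<in> A"
  using x_frontier by (simp add: A_eq frontier_def)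

lemma nor_cone_sphere_nonempty: "nor_cone A x \<inter> sphere 0 1 \<noteq> {}"
proof -
  obtain zz where zz: "\<And>k. zz k \<in> interior X" "zz \<longlonglongrightarrow> x"
    using x_in_X regular_closed closure_sequential by metis
  have "\<forall>k. \<exists>a. a \<in> A \<and> infdist (zz k) A = dist (zz k) a"
    using infdist_attains_inf[OF closed nonempty] by blast
  then obtain aa where "\<And>k. aa k \<in> A" "\<And>k. norm (zz k - aa k) = infdist (zz k) A"
    by (metis dist_norm)
  moreover have "\<And>k. zz k \<notin> A"
    using zz(1) by (simp add: A_eq)
  ultimately obtain \<sigma> u where "strict_mono \<sigma>" "(\<lambda>k. sgn (zz (\<sigma> k) - aa (\<sigma> k))) \<longlonglongrightarrow> u"
    and "u \<in> nor_cone A x \<inter> sphere 0 1"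
    using nearest_directions_limit[of x zz aa, OF x_in_A zz(2)] by blast
  then show ?thesis
    by blast
qed

lemma ascent_step:
  assumes "0 < infdist y X" "norm (y - x) \<le> t" "0 < t" "2 * t \<le> s" "0 \<le> \<gamma>" "\<gamma> < \<mu>"
  obtains z where "norm (z - y) = t" "infdist y X + \<gamma> * t \<le> infdist z X"
proof -
  have "\<exists>z. norm (z - y) = t \<and> infdist y X + \<gamma> * t \<le> infdist z X"
  proof (rule ascent_reaches_sphere[where \<beta> = "(\<mu> + \<gamma>) / 2"])
    show "continuous_on (cball y t) (\<lambda>w. infdist w X)"
      by (intro continuous_intros)
    show "0 < t" "0 \<le> \<gamma>" "\<gamma> < (\<mu> + \<gamma>) / 2"
      using assms by auto
    fix z assume "z \<in> ball y t" "infdist y X \<le> infdist z X"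
    moreover have "infdist z X \<le> infdist y X + dist z y" "infdist y X \<le> dist y x"
      using infdist_triangle infdist_le[OF x_in_X] by auto
    ultimately have "0 < infdist z X" "infdist z X \<le> s"
      using assms(1,2,4) by (auto simp: dist_norm norm_minus_commute)
    then obtain h where "norm h = 1"
      and h: "\<And>p. p \<in> X \<Longrightarrow> norm (z - p) = infdist z X \<Longrightarrow> \<mu> * infdist z X \<le> h \<bullet> (z - p)"
      using clarke_grad_ascent_direction[OF closed_X _ mu_pos clarke_bound] by blast
    have "X \<noteq> {}"
      using x_in_X by auto
    have "0 < (\<mu> - \<gamma>) / 2"
      using assms(6) by simp
    then have "\<forall>\<^sub>F \<sigma> in at_right 0. infdist z X + \<sigma> * (\<mu> - (\<mu> - \<gamma>) / 2) \<le> infdist (z + \<sigma> *\<^sub>R h) X"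
      using infdist_ascent[OF closed_X \<open>X \<noteq> {}\<close> \<open>0 < infdist z X\<close> \<open>norm h = 1\<close>] h by blast
    moreover have "\<mu> - (\<mu> - \<gamma>) / 2 = (\<mu> + \<gamma>) / 2"
      by (simp add: field_simps)
    ultimately have "\<forall>\<^sub>F \<sigma> in at_right 0. infdist z X + \<sigma> * ((\<mu> + \<gamma>) / 2) \<le> infdist (z + \<sigma> *\<^sub>R h) X"
      by simp
    then show "\<exists>h. norm h = 1 \<and>
        (\<forall>\<^sub>F \<sigma> in at_right 0. infdist z X + \<sigma> * ((\<mu> + \<gamma>) / 2) \<le> infdist (z + \<sigma> *\<^sub>R h) X)"
      using \<open>norm h = 1\<close> by blast
  qed
  then show ?thesis
    using that by blast
qed

text \<open>The point \<open>q = z + \<tau> n\<close> lies within \<open>3 * norm (z - x)\<close> of \<open>x\<close> and has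
  \<open>n \<bullet> (q - x) \<ge> 5 \<epsilon> norm (z - x)\<close>, so by the Frechet property of \<open>n\<close> it is not in \<open>A\<close>;
  hence \<open>q \<in> X\<close> and \<open>infdist z X \<le> \<tau>\<close>.\<close>
lemma infdist_le_normal_component:
  assumes "n \<in> nor_cone A x \<inter> sphere 0 1" "0 < \<epsilon>" "\<epsilon> < 1 / 5"
    and frechet: "\<forall>a\<in>A. norm (a - x) < \<delta> \<longrightarrow> n \<bullet> (a - x) \<le> \<epsilon> * norm (a - x)"
    and "5 * \<epsilon> * norm (z - x) < infdist z X" "3 * norm (z - x) < \<delta>"
  shows "infdist z X - 5 * \<epsilon> * norm (z - x) \<le> - (n \<bullet> (z - x))"
proof -
  define p where "p = z - x"
  define \<tau> where "\<tau> = max 0 (- (n \<bullet> p)) + 5 * \<epsilon> * norm p"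
  define q where "q = z + \<tau> *\<^sub>R n"
  have "norm n = 1"
    using assms(1) by simp
  have "z \<noteq> x"
    using assms(5) x_in_X by auto
  then have "0 < norm p"
    by (simp add: p_def)
  have qx: "q - x = p + \<tau> *\<^sub>R n"
    by (simp add: q_def p_def)
  have "\<bar>n \<bullet> p\<bar> \<le> norm p"
    using Cauchy_Schwarz_ineq2[of n p] \<open>norm n = 1\<close> by simp
  have "n \<bullet> (q - x) = n \<bullet> p + \<tau>"
    using \<open>norm n = 1\<close> by (simp add: qx inner_add_right dot_square_norm)
  then have nq: "5 * \<epsilon> * norm p \<le> n \<bullet> (q - x)"
    by (simp add: \<tau>_def)
  have "norm (q - x) \<le> norm p + \<bar>\<tau>\<bar>"
    using norm_triangle_ineq[of p "\<tau> *\<^sub>R n"] \<open>norm n = 1\<close> by (simp add: qx)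
  also have "\<dots> \<le> (2 + 5 * \<epsilon>) * norm p"
    using \<open>\<bar>n \<bullet> p\<bar> \<le> norm p\<close> assms(2) by (simp add: \<tau>_def algebra_simps)
  also have "\<dots> < 3 * norm p"
    using assms(3) \<open>0 < norm p\<close> by simp
  finally have qlt: "norm (q - x) < 3 * norm p" .
  have "q \<notin> A"
  proof
    assume "q \<in> A"
    then have "n \<bullet> (q - x) \<le> \<epsilon> * norm (q - x)"
      using frechet qlt assms(6) by (simp add: p_def)
    also have "\<dots> < 5 * \<epsilon> * norm p"
    proof -
      have "norm (q - x) < 5 * norm p"
        using qlt \<open>0 < norm p\<close> by linarith
      then show ?thesis
        using assms(2) by simp
    qed
    finally show False
      using nq by simp
  qed
  then have "infdist z X \<le> \<tau>"
    using infdist_le[of q X z] interior_subset \<open>norm n = 1\<close> assms(2) \<open>0 < norm p\<close>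
    by (auto simp: A_eq q_def dist_norm \<tau>_def)
  then show ?thesis
    using assms(5) by (auto simp: \<tau>_def p_def)
qed

lemma infdist_le_hull_normal_component:
  assumes "v \<in> convex hull (nor_cone A x \<inter> sphere 0 1)" "0 < \<epsilon>" "\<epsilon> < 1 / 5"
    and frechet: "\<forall>n\<in>nor_cone A x \<inter> sphere 0 1. \<forall>a\<in>A. norm (a - x) < \<delta> \<longrightarrow> n \<bullet> (a - x) \<le> \<epsilon> * norm (a - x)"
    and "5 * \<epsilon> * norm (z - x) < infdist z X" "3 * norm (z - x) < \<delta>"
  shows "infdist z X - 5 * \<epsilon> * norm (z - x) \<le> - (v \<bullet> (z - x))"
proof -
  have "n \<in> {w. (z - x) \<bullet> w \<le> 5 * \<epsilon> * norm (z - x) - infdist z X}" if "n \<in> nor_cone A x \<inter> sphere 0 1" for n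
    using infdist_le_normal_component[OF that assms(2,3) bspec[OF frechet that] assms(5,6)]
    by (simp add: inner_commute)
  then have "convex hull (nor_cone A x \<inter> sphere 0 1) \<subseteq> {w. (z - x) \<bullet> w \<le> 5 * \<epsilon> * norm (z - x) - infdist z X}"
    by (intro hull_minimal convex_halfspace_le) auto
  then show ?thesis
    using assms(1) by (auto simp: inner_commute)
qed

text \<open>Seen from its nearest point \<open>a \<in> A\<close>, the interior point \<open>q\<close> lies in the half-space
  \<open>sgn (q - a) \<bullet> (_ - a) \<ge> 0\<close>, while \<open>x\<close> is almost on its boundary; so \<open>q\<close> stays away from
  \<open>x - (t / norm v) v\<close> when \<open>sgn (q - a)\<close> has a large component along \<open>v\<close>.\<close>
lemma interior_point_far_from_direction:
  assumes "q \<in> interior X" "norm (q - x) < 2 * t" "0 < t" "2 * t < r" "32 * t \<le> \<epsilon> * r" "0 < norm v"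
    and dir: "\<And>a. a \<in> A \<Longrightarrow> norm (q - a) = infdist q A \<Longrightarrow>
      (norm v)\<^sup>2 - \<epsilon> * norm v / 2 \<le> sgn (q - a) \<bullet> v"
  shows "t * (norm v - \<epsilon>) \<le> norm (q - (x - (t / norm v) *\<^sub>R v))"
proof -
  define m where "m = norm v"
  define y where "y = x - (t / m) *\<^sub>R v"
  have "q \<notin> A"
    using assms(1) by (simp add: A_eq)
  obtain a where "a \<in> A" and "infdist q A = dist q a"
    using infdist_attains_inf[OF closed nonempty] by blast
  then have qa: "norm (q - a) = infdist q A"
    by (simp add: dist_norm)
  define u where "u = sgn (q - a)"
  have "q \<noteq> a"
    using \<open>q \<notin> A\<close> \<open>a \<in> A\<close> by auto
  then have "norm u = 1"
    by (simp add: u_def norm_sgn)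
  have ux: "u \<bullet> (x - a) \<le> t * \<epsilon> / 2"
    using nearest_direction_almost_tangent[OF x_in_A \<open>q \<notin> A\<close> \<open>a \<in> A\<close> qa assms(2,3,4,5)]
    by (simp add: u_def)
  have "u \<bullet> (x - y) = (t / m) * (u \<bullet> v)"
    by (simp add: y_def)
  also have "\<dots> \<ge> (t / m) * (m\<^sup>2 - \<epsilon> * m / 2)"
    using dir[OF \<open>a \<in> A\<close> qa] assms(3,6) by (intro mult_left_mono) (simp_all add: u_def m_def)
  also have "(t / m) * (m\<^sup>2 - \<epsilon> * m / 2) = t * m - t * \<epsilon> / 2"
    using assms(6) by (simp add: m_def field_simps power2_eq_square)
  finally have uxy: "t * m - t * \<epsilon> / 2 \<le> u \<bullet> (x - y)" .
  have "u \<bullet> (q - a) = norm (q - a)"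
    using \<open>q \<noteq> a\<close> by (simp add: u_def sgn_div_norm dot_square_norm power2_eq_square)
  moreover have "u \<bullet> (q - y) = u \<bullet> (q - a) - u \<bullet> (x - a) + u \<bullet> (x - y)"
    by (simp add: inner_diff_right)
  moreover have "u \<bullet> (q - y) \<le> norm (q - y)"
    using norm_cauchy_schwarz[of u "q - y"] \<open>norm u = 1\<close> by simp
  ultimately have "t * m - t * \<epsilon> \<le> norm (q - y)"
    using ux uxy norm_ge_zero[of "q - a"] by linarith
  then show ?thesis
    by (simp add: y_def m_def right_diff_distrib)
qed

lemma infdist_ge_interior_bound:
  assumes "\<And>q. q \<in> interior X \<Longrightarrow> c \<le> norm (y - q)"
  shows "c \<le> infdist y X"
proof -
  have "interior X \<noteq> {}"
    using x_in_X regular_closed by auto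
  then have "c \<le> infdist y (interior X)"
    using assms by (simp add: infdist_notempty dist_norm cINF_greatest)
  also have "\<dots> = infdist y X"
    using regular_closed setdist_closure_2[of "{y}" "interior X"] by (simp add: infdist_eq_setdist)
  finally show ?thesis .
qed

lemma infdist_along_direction:
  assumes vN: "\<And>n. n \<in> nor_cone A x \<inter> sphere 0 1 \<Longrightarrow> (norm v)\<^sup>2 \<le> n \<bullet> v"
    and "0 < norm v" "norm v \<le> 1" "0 < \<epsilon>"
  shows "\<forall>\<^sub>F t in at_right 0. t * (norm v - \<epsilon>) \<le> infdist (x - (t / norm v) *\<^sub>R v) X"
proof -
  have "0 < \<epsilon> * norm v / 2"
    using assms(2,4) by simp
  then obtain \<delta> where "0 < \<delta>" and dir: "\<And>q a. q \<notin> A \<Longrightarrow> norm (q - x) < \<delta> \<Longrightarrow> a \<in> A \<Longrightarrow>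
      norm (q - a) = infdist q A \<Longrightarrow> (norm v)\<^sup>2 - \<epsilon> * norm v / 2 \<le> sgn (q - a) \<bullet> v"
    using nearest_directions_near_nor_cone[OF x_in_A vN] by blast
  have "t * (norm v - \<epsilon>) \<le> infdist (x - (t / norm v) *\<^sub>R v) X"
    if t: "0 < t" "2 * t < \<delta>" "2 * t < r" "32 * t \<le> \<epsilon> * r" for t
  proof (rule infdist_ge_interior_bound)
    fix q assume "q \<in> interior X"
    show "t * (norm v - \<epsilon>) \<le> norm (x - (t / norm v) *\<^sub>R v - q)"
    proof (cases "norm (q - x) < 2 * t")
      case True
      then show ?thesis
        using interior_point_far_from_direction[OF \<open>q \<in> interior X\<close> True t(1,3,4) assms(2)]
          dir \<open>q \<in> interior X\<close> t(2) by (simp add: A_eq norm_minus_commute)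
    next
      case False
      have "norm (q - x) \<le> norm (q - (x - (t / norm v) *\<^sub>R v)) + norm ((t / norm v) *\<^sub>R v)"
        using norm_triangle_ineq[of "q - (x - (t / norm v) *\<^sub>R v)" "- ((t / norm v) *\<^sub>R v)"] by simp
      moreover have "norm ((t / norm v) *\<^sub>R v) = t"
        using t(1) assms(2) by simp
      moreover have "t * (norm v - \<epsilon>) \<le> t"
        using t(1) assms(3,4) by (simp add: mult_left_le)
      ultimately show ?thesis
        using False by (simp add: norm_minus_commute)
    qed
  qed
  moreover have "0 < min (\<delta> / 2) (min (r / 2) (\<epsilon> * r / 32))"
    using \<open>0 < \<delta>\<close> r_pos assms(4) by simp
  ultimately show ?thesis
    unfolding eventually_at_right_field by (intro exI[of _ "min (\<delta> / 2) (min (r / 2) (\<epsilon> * r / 32))"]) auto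
qed

lemma start_point_against_direction:
  assumes vN: "\<And>n. n \<in> nor_cone A x \<inter> sphere 0 1 \<Longrightarrow> (norm v)\<^sup>2 \<le> n \<bullet> v"
    and "norm v \<le> 1" "0 < \<epsilon>" "0 < \<delta>"
  obtains t y where "0 < t" "t < \<delta>" "0 < infdist y X" "norm (y - x) \<le> t"
    "- (v \<bullet> (y - x)) - \<epsilon> * t \<le> infdist y X"
proof (cases "v = 0")
  case True
  have "x \<in> closure (- X)"
    using x_frontier by (simp add: frontier_closures)
  then obtain y where "y \<in> - X" "dist y x < \<delta> / 2"
    using assms(4) closure_approachable by (metis half_gt_zero)
  moreover from this have "0 < infdist y X"
    using infdist_pos_not_in_closed[OF closed_X] x_in_X by auto
  moreover have "0 < \<epsilon> * (\<delta> / 2)"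
    using assms(3,4) by simp
  ultimately show ?thesis
    using that[of "\<delta> / 2" y] True assms(4) by (simp add: dist_norm)
next
  case False
  define m where "m = norm v"
  define \<epsilon>' where "\<epsilon>' = min \<epsilon> (m / 2)"
  have "0 < m" "0 < \<epsilon>'"
    using False assms(3) by (simp_all add: m_def \<epsilon>'_def)
  have "\<forall>\<^sub>F t in at_right 0. t * (m - \<epsilon>') \<le> infdist (x - (t / m) *\<^sub>R v) X"
    using infdist_along_direction[OF vN _ assms(2) \<open>0 < \<epsilon>'\<close>] \<open>0 < m\<close> by (simp add: m_def)
  moreover have "\<forall>\<^sub>F t in at_right 0. 0 < t \<and> t < \<delta>"
    using assms(4) unfolding eventually_at_right_field by (intro exI[of _ \<delta>]) auto
  ultimately obtain t where t: "0 < t" "t < \<delta>" and ty: "t * (m - \<epsilon>') \<le> infdist (x - (t / m) *\<^sub>R v) X"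
    using eventually_happens'[OF trivial_limit_at_right_real eventually_conj] by blast
  define y where "y = x - (t / m) *\<^sub>R v"
  have "norm (y - x) = t"
    using t(1) \<open>0 < m\<close> by (simp add: y_def m_def)
  have "- (v \<bullet> (y - x)) = t * m"
    using \<open>0 < m\<close> by (simp add: y_def m_def dot_square_norm power2_eq_square)
  have "t * (m / 2) \<le> t * (m - \<epsilon>')" "t * (m - \<epsilon>) \<le> t * (m - \<epsilon>')"
    using t(1) by (simp_all add: \<epsilon>'_def)
  moreover have "0 < t * (m / 2)"
    using t(1) \<open>0 < m\<close> by simp
  ultimately show ?thesis
    using that[OF t, of y] ty \<open>norm (y - x) = t\<close> \<open>- (v \<bullet> (y - x)) = t * m\<close>
    by (simp add: y_def algebra_simps)
qed

lemma step_growth_le: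
  assumes vC: "v \<in> convex hull (nor_cone A x \<inter> sphere 0 1)" and "0 < \<epsilon>" "\<epsilon> < 1 / 5"
    and frechet: "\<forall>n\<in>nor_cone A x \<inter> sphere 0 1. \<forall>a\<in>A. norm (a - x) < \<delta> \<longrightarrow> n \<bullet> (a - x) \<le> \<epsilon> * norm (a - x)"
    and "norm (y - x) \<le> t" "norm (z - y) = t" "6 * t < \<delta>" "10 * \<epsilon> * t < infdist z X"
    and start: "- (v \<bullet> (y - x)) - \<epsilon> * t \<le> infdist y X"
  shows "infdist z X \<le> infdist y X + (norm v + 11 * \<epsilon>) * t"
proof -
  have zx: "norm (z - x) \<le> 2 * t"
    using norm_triangle_ineq[of "z - y" "y - x"] assms(5,6) by simp
  then have "5 * \<epsilon> * norm (z - x) \<le> 10 * \<epsilon> * t"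
    using \<open>0 < \<epsilon>\<close> by simp
  moreover from this have "infdist z X - 5 * \<epsilon> * norm (z - x) \<le> - (v \<bullet> (z - x))"
    using zx assms(7,8) by (intro infdist_le_hull_normal_component[OF vC assms(2,3) frechet]) auto
  moreover have "- (v \<bullet> (z - y)) \<le> norm v * t"
    using Cauchy_Schwarz_ineq2[of v "z - y"] assms(6) by simp
  moreover have "v \<bullet> (z - x) = v \<bullet> (z - y) + v \<bullet> (y - x)"
    by (simp add: inner_diff_right)
  ultimately show ?thesis
    using start by (simp add: algebra_simps)
qed

lemma min_norm_point_ge_mu:
  assumes vN: "\<And>n. n \<in> nor_cone A x \<inter> sphere 0 1 \<Longrightarrow> (norm v)\<^sup>2 \<le> n \<bullet> v"
    and vC: "v \<in> convex hull (nor_cone A x \<inter> sphere 0 1)" and "norm v \<le> 1"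
  shows "\<mu> \<le> norm v"
proof (rule ccontr)
  assume "\<not> \<mu> \<le> norm v"
  define m \<eta> where "m = norm v" and "\<eta> = \<mu> - norm v"
  define \<epsilon> \<gamma> where "\<epsilon> = \<eta> / 40" and "\<gamma> = m + \<eta> / 2"
  have "0 < \<eta>"
    using \<open>\<not> \<mu> \<le> norm v\<close> by (simp add: \<eta>_def)
  then have "0 < \<epsilon>" "0 \<le> \<gamma>"
    by (simp_all add: \<epsilon>_def \<gamma>_def m_def)
  have "\<eta> \<le> 1"
    using mu_le_1 norm_ge_zero[of v] unfolding \<eta>_def by linarith
  then have "\<epsilon> < 1 / 5"
    by (simp add: \<epsilon>_def)
  have "\<gamma> < \<mu>"
    using \<open>0 < \<eta>\<close> unfolding \<gamma>_def \<eta>_def m_def by (simp add: field_simps)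
  obtain \<delta> where "0 < \<delta>" and frechet: "\<forall>n\<in>nor_cone A x \<inter> sphere 0 1. \<forall>a\<in>A.
      norm (a - x) < \<delta> \<longrightarrow> n \<bullet> (a - x) \<le> \<epsilon> * norm (a - x)"
    using nor_cone_uniform_frechet[OF \<open>0 < \<epsilon>\<close>] by blast
  have "0 < min (s / 2) (\<delta> / 6)"
    using s_pos \<open>0 < \<delta>\<close> by simp
  then obtain t y where t: "0 < t" "t < min (s / 2) (\<delta> / 6)" and y: "0 < infdist y X" "norm (y - x) \<le> t"
    and start: "- (v \<bullet> (y - x)) - \<epsilon> * t \<le> infdist y X"
    using start_point_against_direction[OF vN \<open>norm v \<le> 1\<close> \<open>0 < \<epsilon>\<close>] by blast
  obtain z where z: "norm (z - y) = t" and rise: "infdist y X + \<gamma> * t \<le> infdist z X"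
    using ascent_step[OF y, of \<gamma>] t \<open>0 \<le> \<gamma>\<close> \<open>\<gamma> < \<mu>\<close> by auto
  have "10 * \<epsilon> < \<gamma>"
    using \<open>0 < \<eta>\<close> norm_ge_zero[of v] unfolding \<epsilon>_def \<gamma>_def m_def by linarith
  then have "10 * \<epsilon> * t < infdist z X"
    using rise y(1) t(1) by (smt (verit) mult_strict_right_mono)
  moreover have "6 * t < \<delta>"
    using t(2) by simp
  ultimately have "infdist z X \<le> infdist y X + (m + 11 * \<epsilon>) * t"
    using step_growth_le[OF vC \<open>0 < \<epsilon>\<close> \<open>\<epsilon> < 1 / 5\<close> frechet y(2) z _ _ start] by (simp add: m_def)
  then have "\<gamma> * t \<le> (m + 11 * \<epsilon>) * t"
    using rise by linarith
  then have "\<gamma> \<le> m + 11 * \<epsilon>"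
    using t(1) by simp
  then show False
    using \<open>0 < \<eta>\<close> by (simp add: \<gamma>_def \<epsilon>_def)
qed

theorem Delta_convex_hull_nor_cone_ge: "\<mu> \<le> Delta (convex hull (nor_cone A x \<inter> sphere 0 1))"
proof -
  define C where "C = convex hull (nor_cone A x \<inter> sphere 0 1)"
  have "compact C" "convex C"
    by (simp_all add: C_def compact_convex_hull compact_nor_cone_sphere)
  obtain n0 where n0: "n0 \<in> nor_cone A x \<inter> sphere 0 1"
    using nor_cone_sphere_nonempty by blast
  then have "n0 \<in> C"
    by (simp add: C_def hull_inc)
  then have "C \<noteq> {}"
    by blast
  obtain v where "v \<in> C" and v: "\<And>c. c \<in> C \<Longrightarrow> (norm v)\<^sup>2 \<le> c \<bullet> v"
    and min: "\<And>c. c \<in> C \<Longrightarrow> norm v \<le> norm c"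
    using compact_convex_min_norm_point[OF \<open>compact C\<close> \<open>convex C\<close> \<open>C \<noteq> {}\<close>] by metis
  have "norm v \<le> 1"
    using min[OF \<open>n0 \<in> C\<close>] n0 by simp
  then have "\<mu> \<le> norm v"
    using min_norm_point_ge_mu v \<open>v \<in> C\<close> by (simp add: C_def hull_inc)
  then show ?thesis
    unfolding C_def[symmetric] using \<open>C \<noteq> {}\<close> min by (intro Delta_geI) (auto intro: order_trans)
qed

end

lemma compl_cl_eq: "compl_cl X = - interior X"
  by (simp add: compl_cl_def closure_complement Compl_eq_Diff_UNIV[symmetric])

lemma reach_pos_unique_nearest:
  assumes "0 < reach A"
  obtains r where "0 < r" "\<And>y. infdist y A < r \<Longrightarrow> \<exists>!a. a \<in> A \<and> norm (y - a) = infdist y A"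
proof -
  obtain e where "e \<in> {ereal t | t. 0 \<le> t \<and>
      (\<forall>y. dist_fun A y < t \<longrightarrow> (\<exists>!a. a \<in> A \<and> norm (y - a) = dist_fun A y))}" "0 < e"
    using assms unfolding reach_def less_Sup_iff by blast
  then show ?thesis
    using that by (auto simp: dist_fun_def)
qed

lemma reach_mu_pos_clarke_bound:
  assumes "0 < reach_mu \<mu> X"
  obtains s where "0 < s"
    "\<And>y. 0 < infdist y X \<Longrightarrow> infdist y X \<le> s \<Longrightarrow> \<mu> \<le> Delta (clarke_grad (dist_fun X) y)"
proof -
  obtain e where "e \<in> {ereal s | s. 0 \<le> s \<and> (\<forall>y. 0 < dist_fun X y \<and> dist_fun X y \<le> s \<longrightarrow>
      \<mu> \<le> Delta (clarke_grad (dist_fun X) y))}" "0 < e"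
    using assms unfolding reach_mu_def less_Sup_iff by blast
  then show ?thesis
    using that by (auto simp: dist_fun_def)
qed

theorem mainTheorem20:
  fixes X :: "'a::euclidean_space set" and \<mu> :: real and x :: 'a
  assumes "0 < \<mu>" and "\<mu> \<le> 1"
    and "complementary_regular X"
    and "reach_mu \<mu> X > 0"
    and "x \<in> frontier X"
  shows "Delta (convex hull (nor_cone (compl_cl X) x \<inter> sphere 0 1)) \<ge> \<mu>"
proof -
  have "compact X" "closure (interior X) = X" "reach (compl_cl X) > 0"
    using assms(3) unfolding complementary_regular_def by auto
  obtain r where "0 < r"
    and "\<And>y. infdist y (compl_cl X) < r \<Longrightarrow> \<exists>!a. a \<in> compl_cl X \<and> norm (y - a) = infdist y (compl_cl X)"
    using reach_pos_unique_nearest[OF \<open>reach (compl_cl X) > 0\<close>] by blast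
  moreover obtain s where "0 < s"
    and "\<And>y. 0 < infdist y X \<Longrightarrow> infdist y X \<le> s \<Longrightarrow> \<mu> \<le> Delta (clarke_grad (dist_fun X) y)"
    using reach_mu_pos_clarke_bound[OF assms(4)] by blast
  moreover have "x \<in> compl_cl X"
    using assms(5) by (simp add: compl_cl_eq frontier_def)
  ultimately interpret complementary_regular_point "compl_cl X" r X x s \<mu>
    using \<open>compact X\<close> \<open>closure (interior X) = X\<close> assms(1,2,5)
    by unfold_locales (auto simp: compl_cl_eq compact_imp_closed)
  show ?thesis
    by (rule Delta_convex_hull_nor_cone_ge)
qed

end
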